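(* Let $R$ be a ring and let $n\geq 2$ be a fixed integer. If $x^n-x$ is nilpotent for every $x\in R$, then $R$ is D-regularly nil clean.
   Context: All rings are associative with identity $1\neq 0$. A ring $R$ is called D-regularly nil clean if for each $a\in R$ there exists an idempotent $e\in aRa$ such that $a(1-e)$ is nilpotent. *)

theory Defs
  imports Main
begin

definition nilpotent :: "'a::ring_1 \<Rightarrow> bool" where
  "nilpotent a \<longleftrightarrow> (\<exists>k::nat. a ^ k = 0)"

definition idempotent :: "'a::ring_1 \<Rightarrow> bool" where
  "idempotent e \<longleftrightarrow> e * e = e"

definition corner :: "'a::ring_1 \<Rightarrow> 'a set" where
  "corner a = {a * r * a | r. True}"

definition D_regularly_nil_clean :: "'a::ring_1 itself \<Rightarrow> bool" where
  "D_regularly_nil_clean _ \<longleftrightarrow>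
     (\<forall>a::'a. \<exists>e. e \<in> corner a \<and> idempotent e \<and> nilpotent (a * (1 - e)))"

end

theory Submission
  imports Defs
begin

text \<open>
  If \<open>a\<^sup>n - a = -a(1 - a\<^sup>n\<^sup>-\<^sup>1)\<close> is nilpotent then, the two factors commuting,
  \<open>a\<^sup>k(1 - a\<^sup>n\<^sup>-\<^sup>1)\<^sup>k = 0\<close>; expanding the second factor gives \<open>a\<^sup>k = a\<^sup>k\<^sup>+\<^sup>1h\<close> with \<open>h\<close> a
  polynomial in \<open>a\<close>. Then \<open>e = a\<^sup>kh\<^sup>k\<close> is an idempotent commuting with \<open>a\<close> and
  satisfying \<open>a\<^sup>ke = a\<^sup>k\<close>, so \<open>(a(1 - e))\<^sup>k = a\<^sup>k(1 - e) = 0\<close>; for \<open>k \<ge> 2\<close> it lies in \<open>aRa\<close>.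
\<close>

lemma power_mult_commuting:
  fixes x y :: "'a::monoid_mult"
  assumes "x * y = y * x"
  shows "(x * y) ^ m = x ^ m * y ^ m"
proof (induction m)
  case (Suc m)
  have "y * x ^ m = x ^ m * y"
    using power_commuting_commutes[of x y m] assms by simp
  then have "y * (x ^ m * y ^ m) = x ^ m * (y * y ^ m)"
    by (simp only: mult.assoc[symmetric])
  then show ?case
    using Suc by (simp add: mult.assoc)
qed simp

lemma one_diff_power_eq_ring_1:
  fixes x :: "'a::ring_1"
  shows "1 - x ^ j = (1 - x) * (\<Sum>i<j. x ^ i)"
  by (induction j) (simp_all add: algebra_simps)

lemma idempotent_one_minus: "idempotent e \<Longrightarrow> idempotent (1 - e)"
  by (simp add: idempotent_def algebra_simps)

lemma idempotent_power_Suc: "idempotent e \<Longrightarrow> e ^ Suc j = e"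
  by (induction j) (simp_all add: idempotent_def mult.assoc[symmetric])

lemma nilpotent_uminus: "nilpotent x \<Longrightarrow> nilpotent (- x)"
  unfolding nilpotent_def by (metis power_minus mult_zero_right)

lemma power_diff_eq_factor:
  fixes a :: "'a::ring_1"
  assumes "2 \<le> n"
  shows "a * (1 - a * a ^ (n - 2)) = - (a ^ n - a)"
  using assms by (cases n; cases "n - 1") (simp_all add: algebra_simps)

lemma absorption_of_nilpotent_power_diff:
  fixes a :: "'a::ring_1"
  assumes n: "2 \<le> n" and nil: "nilpotent (a ^ n - a)"
  obtains k h where "2 \<le> k" "h * a = a * h" "a ^ k = a ^ Suc k * h"
proof -
  define b where "b = a * a ^ (n - 2)"
  have "nilpotent (a * (1 - b))"
    using nilpotent_uminus[OF nil] by (simp only: b_def power_diff_eq_factor[OF n])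
  then obtain k0 where "(a * (1 - b)) ^ k0 = 0"
    unfolding nilpotent_def by blast
  define k where "k = k0 + 2"
  define S where "S = (\<Sum>i<k. (1 - b) ^ i)"
  have nil_k: "(a * (1 - b)) ^ k = 0"
    using \<open>(a * (1 - b)) ^ k0 = 0\<close> by (simp add: k_def power_add)
  have ba: "b * a = a * b"
    by (simp add: b_def mult.assoc power_commutes)
  then have "a * (1 - b) = (1 - b) * a"
    by (simp add: left_diff_distrib right_diff_distrib)
  then have ak_nil: "a ^ k * (1 - b) ^ k = 0"
    using nil_k power_mult_commuting by metis
  have "1 - (1 - b) ^ k = b * S"
    using one_diff_power_eq_ring_1[of "1 - b" k] by (simp add: S_def)
  then have "a ^ k * (b * S) = a ^ k * (1 - (1 - b) ^ k)"
    by simp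
  also have "\<dots> = a ^ k"
    using ak_nil by (simp add: right_diff_distrib)
  finally have absorb: "a ^ k = a ^ Suc k * (a ^ (n - 2) * S)"
    by (simp only: b_def power_Suc2 mult.assoc)
  have "(1 - b) ^ i * a = a * (1 - b) ^ i" for i
    by (rule power_commuting_commutes) (simp add: left_diff_distrib right_diff_distrib ba)
  then have "S * a = a * S"
    by (simp add: S_def sum_distrib_left sum_distrib_right)
  then have "a ^ (n - 2) * S * a = a * (a ^ (n - 2) * S)"
    by (simp add: mult.assoc) (simp add: mult.assoc[symmetric] power_commutes)
  with absorb show thesis
    using that[of k] by (simp add: k_def)
qed

lemma commuting_multiple_of_square_in_corner:
  fixes a c :: "'a::ring_1"
  assumes "2 \<le> k" "c * a = a * c"
  shows "a ^ k * c \<in> corner a"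
proof -
  obtain m where k: "k = Suc (Suc m)"
    using assms(1) by (metis add_2_eq_Suc le_Suc_ex)
  have "a ^ k * c = a * (a ^ m * (a * c))"
    unfolding k power_Suc[of a "Suc m"] power_Suc2[of a m] by (simp only: mult.assoc)
  also have "\<dots> = a * (a ^ m * (c * a))"
    by (simp only: assms(2))
  also have "\<dots> = a * (a ^ m * c) * a"
    by (simp only: mult.assoc)
  finally show ?thesis
    unfolding corner_def by blast
qed

lemma power_absorb_iterate:
  fixes a h :: "'a::ring_1"
  assumes absorb: "a ^ k = a ^ Suc k * h"
  shows "a ^ k = a ^ (k + j) * h ^ j"
proof (induction j)
  case (Suc j)
  have "a ^ (k + Suc j) = a ^ j * a ^ Suc k"
    by (simp only: power_add[symmetric] add.commute[of k] add_Suc_right add_Suc)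
  then have "a ^ (k + Suc j) * h ^ Suc j = a ^ j * (a ^ Suc k * h) * h ^ j"
    by (simp only: power_Suc[of h] mult.assoc)
  also have "\<dots> = a ^ (k + j) * h ^ j"
    by (simp only: absorb[symmetric] power_add[symmetric] add.commute[of j])
  finally show ?case using Suc by simp
qed simp

lemma absorption_idempotent:
  fixes a h :: "'a::ring_1"
  assumes ha: "h * a = a * h" and absorb: "a ^ k = a ^ Suc k * h"
  shows "idempotent (a ^ k * h ^ k)" and "nilpotent (a * (1 - a ^ k * h ^ k))"
proof -
  define e where "e = a ^ k * h ^ k"
  have hk: "h ^ k * a ^ j = a ^ j * h ^ k" for j
    using power_commuting_commutes[of h "a ^ j" k] power_commuting_commutes[of a h j] ha
    by simp
  have ae: "a ^ k * e = a ^ k"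
    using power_absorb_iterate[OF absorb, of k]
    by (simp add: e_def power_add mult.assoc)
  have "e * e = a ^ k * (h ^ k * a ^ k) * h ^ k"
    by (simp add: e_def mult.assoc)
  also have "\<dots> = (a ^ k * e) * h ^ k"
    by (simp only: hk e_def mult.assoc)
  also have "\<dots> = e"
    by (simp only: ae) (simp only: e_def)
  finally show idem: "idempotent e"
    by (simp add: idempotent_def)
  have "e * a = a ^ k * (a * h ^ k)"
    using hk[of 1] by (simp add: e_def mult.assoc)
  also have "\<dots> = a * e"
    by (simp only: e_def mult.assoc[symmetric] power_commutes)
  finally have "e * a = a * e" .
  then have "(a * (1 - e)) ^ Suc k = a ^ Suc k * (1 - e) ^ Suc k"
    by (intro power_mult_commuting) (simp add: left_diff_distrib right_diff_distrib)
  also have "\<dots> = a * (a ^ k * (1 - e))"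
    using idempotent_power_Suc[OF idempotent_one_minus[OF idem]] by (simp add: mult.assoc)
  also have "\<dots> = 0"
    using ae by (simp add: algebra_simps)
  finally show "nilpotent (a * (1 - e))"
    unfolding nilpotent_def by blast
qed

theorem corollary2p8:
  fixes n :: nat
  assumes "(1::'a::ring_1) \<noteq> 0"
    and "n \<ge> 2"
    and "\<forall>x::'a. nilpotent (x ^ n - x)"
  shows "D_regularly_nil_clean TYPE('a)"
  unfolding D_regularly_nil_clean_def
proof
  fix a :: 'a
  obtain k h where k: "2 \<le> k" and ha: "h * a = a * h" and absorb: "a ^ k = a ^ Suc k * h"
    using absorption_of_nilpotent_power_diff[OF assms(2)] assms(3) by blast
  have "h ^ k * a = a * h ^ k"
    using power_commuting_commutes[OF ha] by simp
  then have "a ^ k * h ^ k \<in> corner a"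
    using commuting_multiple_of_square_in_corner[OF k] by blast
  then show "\<exists>e. e \<in> corner a \<and> idempotent e \<and> nilpotent (a * (1 - e))"
    using absorption_idempotent[OF ha absorb] by blast
qed

end
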